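(* For every packet $p\in\Pi$, every edge $e=(t,r)\in E(p)$ and every integer $\tau\ge r_p$, $$\mathrm{imp}(p,e)-d(e)\big(\beta_{t,\tau}+\beta_{r,\tau}\big)\;\le\;2\,w_p\,\big(\tau+\Delta(e)-r_p\big),$$ where $\mathrm{imp}(p,e)$ is the quantity computed when $p$ is processed by ALG.
   Context: Network. $S,T,R,D$ are pairwise disjoint finite sets (sources, transmitters, receivers, destinations). Each transmitter $t\in T$ is attached to a source $s(t)\in S$ via a link of integer delay $d(s(t),t)\ge 0$; each receiver $r\in R$ is attached to a destination $d(r)\in D$ via a link of integer delay $d(r,d(r))\ge 0$. A set $E_R\subseteq T\times R$ of reconfigurable edges is given, each $e\in E_R$ with integer delay $d(e)\ge 1$. A set $E_\ell\subseteq S\times D$ of fixed links is given, each with integer delay $\ge0$. For $e=(t,r)\in E_R$ put $\Delta(e)=d(s(t),t)+d(e)+d(r,d(r))$. Two edges of $E_R$ are adjacent if they share a transmitter or a receiver (an edge is adjacent to itself). Packets. $\Pi$ is a finite set of unit-size packets; packet $p$ has weight $w_p>0$, release time $r_p\in\mathbb Z_{\ge1}$, source $s_p$, destination $d_p$. Let $E(p)=\{(t,r)\in E_R: s(t)=s_p,\ d(r)=d_p\}$; assume $E(p)\neq\emptyset$ for all $p$. $\Pi_\ell$ is the set of packets with $(s_p,d_p)\in E_\ell$, and $\ell_p:=d(s_p,d_p)$ for them. Fix a total order $\prec$ on $\Pi$ with $r_p<r_q\Rightarrow p\prec q$. Algorithm ALG. Packets are processed in the order $\prec$; $p$ is processed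 at time $r_p$, before transmission step $r_p$. A packet assigned to a reconfigurable edge $e$ is split into $d(e)$ chunks of weight $w_p/d(e)$ assigned to $e$; $p(c)$, $w_c$, $e(c)$ denote the packet, weight and edge of chunk $c$. A chunk is pending until transmitted; $W(C)$ is the total weight of a set $C$ of chunks. When $p$ is processed, $B(p)$ is the set of pending chunks of packets $p'\prec p$; for $e=(t,r)\in E(p)$, $\mathrm{Adj}(p,e)$ = chunks of $B(p)$ whose edge is adjacent to $e$, $H(p,e)=\{c\in\mathrm{Adj}(p,e):w_c\ge w_p/d(e)\}$, $L(p,e)=\mathrm{Adj}(p,e)\setminus H(p,e)$, and $\mathrm{imp}(p,e)=w_p(d(s_p,t)+\frac{d(e)+1}{2}+d(r,d_p))+w_p|H(p,e)|+d(e)W(L(p,e))$. With $e^*\in\arg\min_{e\in E(p)}\mathrm{imp}(p,e)$: if $p\in\Pi_\ell$ and $w_p\ell_p\le\mathrm{imp}(p,e^* )$, $p$ is sent over its fixed link; otherwise $p$ is assigned to $e(p):=e^*$ and split into chunks. Scheduler: at each integer $\tau\ge1$, build $M_\tau$ greedily over pending chunks in order of decreasing weight (ties by $\prec$ on packets, then arbitrary), adding $c$ iff no chunk already in $M_\tau$ has an edge adjacent to $e(c)$; chunks of $M_\tau$ are transmitted at step $\tau$. If chunk $c$ of $p$ is transmitted at step $\tau_c$ via $e(p)=(t,r)$, its completion time is $f_c=\tau_c+1+d(s_p,t)+d(r,d_p)$, and $c$ is active at integer times $\tau$ with $r_p\le\tau<f_c$. Dual variables $\beta$: for $t\in T$ and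 integer $\tau\ge1$, $\beta_{t,\tau}$ is the total weight of chunks active at $\tau$ whose assigned edge has transmitter $t$; for $r\in R$, $\beta_{r,\tau}$ is the total weight of chunks active at $\tau$ whose assigned edge has receiver $r$. *)

theory Defs
  imports Complex_Main
begin

(* A network instance together with the packet set.
   Sources, transmitters, receivers, destinations live in four distinct
   types 's, 't, 'r, 'd, so the four sets are automatically pairwise disjoint. *)
record ('s, 't, 'r, 'd, 'p) inst =
  srcs    :: "'s set"
  trans   :: "'t set"
  recvs   :: "'r set"
  dests   :: "'d set"
  src_of  :: "'t \<Rightarrow> 's"
  d_st    :: "'t \<Rightarrow> nat"
  dst_of  :: "'r \<Rightarrow> 'd"
  d_rd    :: "'r \<Rightarrow> nat"
  ER      :: "('t \<times> 'r) set"     (* reconfigurable edges *)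
  d_e     :: "('t \<times> 'r) \<Rightarrow> nat"
  EL      :: "('s \<times> 'd) set"     (* fixed links *)
  d_l     :: "('s \<times> 'd) \<Rightarrow> nat"
  packets :: "'p set"
  wt      :: "'p \<Rightarrow> real"
  rel     :: "'p \<Rightarrow> nat"
  psrc    :: "'p \<Rightarrow> 's"
  pdst    :: "'p \<Rightarrow> 'd"
  prec    :: "'p \<Rightarrow> 'p \<Rightarrow> bool"

definition Ep :: "('s, 't, 'r, 'd, 'p, 'z) inst_scheme \<Rightarrow> 'p \<Rightarrow> ('t \<times> 'r) set" where
  "Ep N p = {(t, r). (t, r) \<in> ER N \<and> src_of N t = psrc N p \<and> dst_of N r = pdst N p}"

definition Pi_l :: "('s, 't, 'r, 'd, 'p, 'z) inst_scheme \<Rightarrow> 'p set" where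
  "Pi_l N = {p \<in> packets N. (psrc N p, pdst N p) \<in> EL N}"

definition Delta :: "('s, 't, 'r, 'd, 'p, 'z) inst_scheme \<Rightarrow> ('t \<times> 'r) \<Rightarrow> nat" where
  "Delta N e = d_st N (fst e) + d_e N e + d_rd N (snd e)"

definition adj :: "('t \<times> 'r) \<Rightarrow> ('t \<times> 'r) \<Rightarrow> bool" where
  "adj e e' \<longleftrightarrow> fst e = fst e' \<or> snd e = snd e'"

definition wf_inst :: "('s, 't, 'r, 'd, 'p, 'z) inst_scheme \<Rightarrow> bool" where
  "wf_inst N \<longleftrightarrow>
     finite (srcs N) \<and> finite (trans N) \<and> finite (recvs N) \<and> finite (dests N) \<and>
     (\<forall>t\<in>trans N. src_of N t \<in> srcs N) \<and>
     (\<forall>r\<in>recvs N. dst_of N r \<in> dests N) \<and>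
     ER N \<subseteq> trans N \<times> recvs N \<and>
     (\<forall>e\<in>ER N. 1 \<le> d_e N e) \<and>
     EL N \<subseteq> srcs N \<times> dests N \<and>
     finite (packets N) \<and>
     (\<forall>p\<in>packets N. 0 < wt N p \<and> 1 \<le> rel N p \<and> psrc N p \<in> srcs N \<and>
                      pdst N p \<in> dests N \<and> Ep N p \<noteq> {}) \<and>
     (\<forall>p\<in>packets N. \<not> prec N p p) \<and>
     (\<forall>p\<in>packets N. \<forall>q\<in>packets N. \<forall>u\<in>packets N.
        prec N p q \<longrightarrow> prec N q u \<longrightarrow> prec N p u) \<and>
     (\<forall>p\<in>packets N. \<forall>q\<in>packets N. p \<noteq> q \<longrightarrow> prec N p q \<or> prec N q p) \<and>
     (\<forall>p\<in>packets N. \<forall>q\<in>packets N. rel N p < rel N q \<longrightarrow> prec N p q)"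

(* An execution: asg p = None means p was sent over its fixed link,
   asg p = Some e means p was assigned to the reconfigurable edge e.
   Chunks of p are the pairs (p, i) with i < d(e(p));
   tx c is the transmission step of chunk c. *)

definition chunks :: "('s, 't, 'r, 'd, 'p, 'z) inst_scheme \<Rightarrow> ('p \<Rightarrow> ('t \<times> 'r) option)
                      \<Rightarrow> ('p \<times> nat) set" where
  "chunks N asg = {(p, i). p \<in> packets N \<and> (\<exists>e. asg p = Some e \<and> i < d_e N e)}"

definition cedge :: "('p \<Rightarrow> ('t \<times> 'r) option) \<Rightarrow> ('p \<times> nat) \<Rightarrow> ('t \<times> 'r)" where
  "cedge asg c = the (asg (fst c))"

definition cw :: "('s, 't, 'r, 'd, 'p, 'z) inst_scheme \<Rightarrow> ('p \<Rightarrow> ('t \<times> 'r) option)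
                  \<Rightarrow> ('p \<times> nat) \<Rightarrow> real" where
  "cw N asg c = wt N (fst c) / real (d_e N (cedge asg c))"

(* B(p): pending chunks of packets p' \<prec> p when p is processed (before step r_p) *)
definition Bset :: "('s, 't, 'r, 'd, 'p, 'z) inst_scheme \<Rightarrow> ('p \<Rightarrow> ('t \<times> 'r) option)
                    \<Rightarrow> ('p \<times> nat \<Rightarrow> nat) \<Rightarrow> 'p \<Rightarrow> ('p \<times> nat) set" where
  "Bset N asg tx p = {c \<in> chunks N asg. prec N (fst c) p \<and> rel N p \<le> tx c}"

definition Adjset :: "('s, 't, 'r, 'd, 'p, 'z) inst_scheme \<Rightarrow> ('p \<Rightarrow> ('t \<times> 'r) option)
                    \<Rightarrow> ('p \<times> nat \<Rightarrow> nat) \<Rightarrow> 'p \<Rightarrow> ('t \<times> 'r) \<Rightarrow> ('p \<times> nat) set" where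
  "Adjset N asg tx p e = {c \<in> Bset N asg tx p. adj (cedge asg c) e}"

definition Hset :: "('s, 't, 'r, 'd, 'p, 'z) inst_scheme \<Rightarrow> ('p \<Rightarrow> ('t \<times> 'r) option)
                    \<Rightarrow> ('p \<times> nat \<Rightarrow> nat) \<Rightarrow> 'p \<Rightarrow> ('t \<times> 'r) \<Rightarrow> ('p \<times> nat) set" where
  "Hset N asg tx p e = {c \<in> Adjset N asg tx p e. wt N p / real (d_e N e) \<le> cw N asg c}"

definition Lset :: "('s, 't, 'r, 'd, 'p, 'z) inst_scheme \<Rightarrow> ('p \<Rightarrow> ('t \<times> 'r) option)
                    \<Rightarrow> ('p \<times> nat \<Rightarrow> nat) \<Rightarrow> 'p \<Rightarrow> ('t \<times> 'r) \<Rightarrow> ('p \<times> nat) set" where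
  "Lset N asg tx p e = Adjset N asg tx p e - Hset N asg tx p e"

definition imp :: "('s, 't, 'r, 'd, 'p, 'z) inst_scheme \<Rightarrow> ('p \<Rightarrow> ('t \<times> 'r) option)
                    \<Rightarrow> ('p \<times> nat \<Rightarrow> nat) \<Rightarrow> 'p \<Rightarrow> ('t \<times> 'r) \<Rightarrow> real" where
  "imp N asg tx p e =
     wt N p * (real (d_st N (fst e)) + (real (d_e N e) + 1) / 2 + real (d_rd N (snd e)))
     + wt N p * real (card (Hset N asg tx p e))
     + real (d_e N e) * (\<Sum>c\<in>Lset N asg tx p e. cw N asg c)"

definition pending :: "('s, 't, 'r, 'd, 'p, 'z) inst_scheme \<Rightarrow> ('p \<Rightarrow> ('t \<times> 'r) option)
                    \<Rightarrow> ('p \<times> nat \<Rightarrow> nat) \<Rightarrow> nat \<Rightarrow> ('p \<times> nat) set" where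
  "pending N asg tx \<tau> = {c \<in> chunks N asg. rel N (fst c) \<le> \<tau> \<and> \<tau> \<le> tx c}"

definition alg_assignment :: "('s, 't, 'r, 'd, 'p, 'z) inst_scheme \<Rightarrow> ('p \<Rightarrow> ('t \<times> 'r) option)
                    \<Rightarrow> ('p \<times> nat \<Rightarrow> nat) \<Rightarrow> bool" where
  "alg_assignment N asg tx \<longleftrightarrow>
     (\<forall>p\<in>packets N.
        (\<exists>e\<in>Ep N p. (\<forall>e'\<in>Ep N p. imp N asg tx p e \<le> imp N asg tx p e') \<and>
           (if p \<in> Pi_l N \<and> wt N p * real (d_l N (psrc N p, pdst N p)) \<le> imp N asg tx p e
            then asg p = None else asg p = Some e)))"

(* the greedy scheduler: at every step \<tau> \<ge> 1 the set of chunks transmitted at \<tau>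
   is the greedy matching built along some order L of the pending chunks that
   lists them by decreasing weight, ties broken by \<prec> on packets, then arbitrarily *)
definition alg_schedule :: "('s, 't, 'r, 'd, 'p, 'z) inst_scheme \<Rightarrow> ('p \<Rightarrow> ('t \<times> 'r) option)
                    \<Rightarrow> ('p \<times> nat \<Rightarrow> nat) \<Rightarrow> bool" where
  "alg_schedule N asg tx \<longleftrightarrow>
     (\<forall>c\<in>chunks N asg. rel N (fst c) \<le> tx c) \<and>
     (\<forall>\<tau>\<ge>1. \<exists>L :: ('p \<times> nat) \<Rightarrow> ('p \<times> nat) \<Rightarrow> bool.
        let P = pending N asg tx \<tau> in
        (\<forall>c\<in>P. \<not> L c c) \<and>
        (\<forall>a\<in>P. \<forall>b\<in>P. \<forall>c\<in>P. L a b \<longrightarrow> L b c \<longrightarrow> L a c) \<and>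
        (\<forall>a\<in>P. \<forall>b\<in>P. a \<noteq> b \<longrightarrow> L a b \<or> L b a) \<and>
        (\<forall>a\<in>P. \<forall>b\<in>P. (cw N asg a > cw N asg b \<or>
                         (cw N asg a = cw N asg b \<and> prec N (fst a) (fst b))) \<longrightarrow> L a b) \<and>
        {c \<in> P. tx c = \<tau>} =
          {c \<in> P. \<not> (\<exists>c'\<in>P. tx c' = \<tau> \<and> L c' c \<and> adj (cedge asg c') (cedge asg c))})"

definition alg_run :: "('s, 't, 'r, 'd, 'p, 'z) inst_scheme \<Rightarrow> ('p \<Rightarrow> ('t \<times> 'r) option)
                    \<Rightarrow> ('p \<times> nat \<Rightarrow> nat) \<Rightarrow> bool" where
  "alg_run N asg tx \<longleftrightarrow> alg_assignment N asg tx \<and> alg_schedule N asg tx"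

definition fin :: "('s, 't, 'r, 'd, 'p, 'z) inst_scheme \<Rightarrow> ('p \<Rightarrow> ('t \<times> 'r) option)
                    \<Rightarrow> ('p \<times> nat \<Rightarrow> nat) \<Rightarrow> ('p \<times> nat) \<Rightarrow> nat" where
  "fin N asg tx c = tx c + 1 + d_st N (fst (cedge asg c)) + d_rd N (snd (cedge asg c))"

definition active :: "('s, 't, 'r, 'd, 'p, 'z) inst_scheme \<Rightarrow> ('p \<Rightarrow> ('t \<times> 'r) option)
                    \<Rightarrow> ('p \<times> nat \<Rightarrow> nat) \<Rightarrow> ('p \<times> nat) \<Rightarrow> nat \<Rightarrow> bool" where
  "active N asg tx c \<tau> \<longleftrightarrow> rel N (fst c) \<le> \<tau> \<and> \<tau> < fin N asg tx c"

definition beta_t :: "('s, 't, 'r, 'd, 'p, 'z) inst_scheme \<Rightarrow> ('p \<Rightarrow> ('t \<times> 'r) option)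
                    \<Rightarrow> ('p \<times> nat \<Rightarrow> nat) \<Rightarrow> 't \<Rightarrow> nat \<Rightarrow> real" where
  "beta_t N asg tx t \<tau> =
     (\<Sum>c\<in>{c \<in> chunks N asg. active N asg tx c \<tau> \<and> fst (cedge asg c) = t}. cw N asg c)"

definition beta_r :: "('s, 't, 'r, 'd, 'p, 'z) inst_scheme \<Rightarrow> ('p \<Rightarrow> ('t \<times> 'r) option)
                    \<Rightarrow> ('p \<times> nat \<Rightarrow> nat) \<Rightarrow> 'r \<Rightarrow> nat \<Rightarrow> real" where
  "beta_r N asg tx r \<tau> =
     (\<Sum>c\<in>{c \<in> chunks N asg. active N asg tx c \<tau> \<and> snd (cedge asg c) = r}. cw N asg c)"

end

theory Submission
  imports Defs
begin

text \<open>Writing \<open>w = w\<^sub>p\<close> and \<open>d = d(e)\<close>, a chunk \<open>c\<close> adjacent to \<open>e\<close> contributes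
  \<open>min w (d w\<^sub>c)\<close> to the non-constant part of \<open>imp(p,e)\<close>. If \<open>c\<close> is still active at \<open>\<tau>\<close>, its
  contribution \<open>d w\<^sub>c\<close> is paid for by \<open>d(\<beta>\<^sub>t\<^sub>,\<^sub>\<tau> + \<beta>\<^sub>r\<^sub>,\<^sub>\<tau>)\<close>. Otherwise it was transmitted at
  some step in \<open>[r\<^sub>p, \<tau>)\<close>, and since the scheduler transmits a matching, at most two chunks
  adjacent to \<open>e\<close> (one through \<open>t\<close>, one through \<open>r\<close>) leave per step; these contribute
  at most \<open>2 w (\<tau> - r\<^sub>p)\<close>. The constant part is at most \<open>w \<Delta>(e)\<close>.\<close>

lemma finite_chunks:
  assumes "wf_inst N"
  shows "finite (chunks N asg)"
proof (rule finite_subset)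
  show "chunks N asg \<subseteq> (SIGMA p:packets N. {..< d_e N (the (asg p))})"
    by (auto simp: chunks_def)
  show "finite (SIGMA p:packets N. {..< d_e N (the (asg p))})"
    using assms by (auto simp: wf_inst_def)
qed

lemma wf_inst_packetD:
  assumes "wf_inst N" "p \<in> packets N"
  shows "0 < wt N p" and "1 \<le> rel N p"
  using assms by (simp_all add: wf_inst_def)

lemma cw_nonneg:
  assumes "wf_inst N" "c \<in> chunks N asg"
  shows "0 \<le> cw N asg c"
proof -
  have "fst c \<in> packets N"
    using assms(2) by (auto simp: chunks_def)
  then show ?thesis
    using wf_inst_packetD(1)[OF assms(1)] by (simp add: cw_def less_imp_le)
qed

lemma rel_le_if_prec:
  assumes "wf_inst N" "p \<in> packets N" "q \<in> packets N" "prec N q p"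
  shows "rel N q \<le> rel N p"
  using assms unfolding wf_inst_def by (meson not_le_imp_less)

lemma Adjset_rel_le:
  assumes "wf_inst N" "p \<in> packets N" "c \<in> Adjset N asg tx p e"
  shows "rel N (fst c) \<le> rel N p" and "rel N p \<le> tx c" and "adj (cedge asg c) e"
  using assms rel_le_if_prec[of N p "fst c"]
  by (auto simp: Adjset_def Bset_def chunks_def)

lemma finite_Adjset:
  assumes "wf_inst N"
  shows "finite (Adjset N asg tx p e)"
  using finite_chunks[OF assms] by (rule rev_finite_subset) (auto simp: Adjset_def Bset_def)

lemma alg_schedule_transmitted_not_adj:
  assumes "alg_schedule N asg tx" "1 \<le> \<sigma>"
    and "a \<in> pending N asg tx \<sigma>" "b \<in> pending N asg tx \<sigma>" "tx a = \<sigma>" "tx b = \<sigma>" "a \<noteq> b"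
  shows "\<not> adj (cedge asg a) (cedge asg b)"
proof
  assume ab: "adj (cedge asg a) (cedge asg b)"
  then have ba: "adj (cedge asg b) (cedge asg a)"
    by (auto simp: adj_def)
  define P where "P = pending N asg tx \<sigma>"
  obtain L where total: "\<forall>a\<in>P. \<forall>b\<in>P. a \<noteq> b \<longrightarrow> L a b \<or> L b a"
    and greedy: "{c \<in> P. tx c = \<sigma>} =
      {c \<in> P. \<not> (\<exists>c'\<in>P. tx c' = \<sigma> \<and> L c' c \<and> adj (cedge asg c') (cedge asg c))}"
    using conjunct2[OF assms(1)[unfolded alg_schedule_def], rule_format, OF assms(2)]
    unfolding Let_def P_def by (elim exE conjE) blast
  have unblocked: "\<not> (\<exists>c'\<in>P. tx c' = \<sigma> \<and> L c' c \<and> adj (cedge asg c') (cedge asg c))"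
    if "c \<in> P" "tx c = \<sigma>" for c
  proof -
    have "c \<in> {c \<in> P. tx c = \<sigma>}"
      using that by simp
    then show ?thesis
      unfolding greedy by simp
  qed
  have "a \<in> P" "b \<in> P"
    using assms(3,4) by (simp_all add: P_def)
  then have "L a b \<or> L b a"
    using total assms(7) by blast
  then show False
    using unblocked[of a] unblocked[of b] \<open>a \<in> P\<close> \<open>b \<in> P\<close> assms(5,6) ab ba by blast
qed

lemma card_le_2_if_pairwise_not_adj:
  assumes "finite X"
    and "\<And>c. c \<in> X \<Longrightarrow> adj (g c) (t, r)"
    and "\<And>a b. a \<in> X \<Longrightarrow> b \<in> X \<Longrightarrow> a \<noteq> b \<Longrightarrow> \<not> adj (g a) (g b)"
  shows "card X \<le> 2"
proof -
  define Xt where "Xt = {c \<in> X. fst (g c) = t}"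
  define Xr where "Xr = {c \<in> X. snd (g c) = r}"
  have "card Xt \<le> 1" "card Xr \<le> 1"
    using assms by (auto simp: Xt_def Xr_def adj_def card_le_Suc0_iff_eq)
  moreover have "X = Xt \<union> Xr"
    using assms(2) by (auto simp: Xt_def Xr_def adj_def)
  ultimately show ?thesis
    using card_Un_le[of Xt Xr] by simp
qed

lemma card_Adjset_transmitted_at_le_2:
  assumes "wf_inst N" "alg_schedule N asg tx" "p \<in> packets N" "rel N p \<le> \<sigma>"
  shows "card {c \<in> Adjset N asg tx p (t, r). tx c = \<sigma>} \<le> 2"
proof (rule card_le_2_if_pairwise_not_adj)
  have pending: "c \<in> pending N asg tx \<sigma>"
    if "c \<in> Adjset N asg tx p (t, r)" "tx c = \<sigma>" for c
    using that Adjset_rel_le[OF assms(1,3) that(1)] assms(4)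
    by (auto simp: pending_def Adjset_def Bset_def)
  have "1 \<le> \<sigma>"
    using wf_inst_packetD(2)[OF assms(1,3)] assms(4) by simp
  then show "\<not> adj (cedge asg a) (cedge asg b)"
    if "a \<in> {c \<in> Adjset N asg tx p (t, r). tx c = \<sigma>}"
       "b \<in> {c \<in> Adjset N asg tx p (t, r). tx c = \<sigma>}" "a \<noteq> b" for a b
    using that pending alg_schedule_transmitted_not_adj[OF assms(2)] by blast
qed (use finite_Adjset[OF assms(1)] Adjset_rel_le[OF assms(1,3)] in auto)

lemma card_Adjset_inactive_le:
  assumes "wf_inst N" "alg_schedule N asg tx" "p \<in> packets N" "rel N p \<le> \<tau>"
  shows "real (card {c \<in> Adjset N asg tx p (t, r). \<not> active N asg tx c \<tau>})
           \<le> 2 * (real \<tau> - real (rel N p))"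
proof -
  let ?A = "Adjset N asg tx p (t, r)"
  have "{c \<in> ?A. \<not> active N asg tx c \<tau>} \<subseteq> (\<Union>\<sigma>\<in>{rel N p..<\<tau>}. {c \<in> ?A. tx c = \<sigma>})"
    using Adjset_rel_le[OF assms(1,3)] assms(4)
    by (fastforce simp: active_def fin_def)
  then have "card {c \<in> ?A. \<not> active N asg tx c \<tau>}
             \<le> card (\<Union>\<sigma>\<in>{rel N p..<\<tau>}. {c \<in> ?A. tx c = \<sigma>})"
    by (rule card_mono[rotated]) (use finite_Adjset[OF assms(1)] in auto)
  also have "\<dots> \<le> (\<Sum>\<sigma>\<in>{rel N p..<\<tau>}. card {c \<in> ?A. tx c = \<sigma>})"
    by (rule card_UN_le) simp
  also have "\<dots> \<le> (\<Sum>\<sigma>\<in>{rel N p..<\<tau>}. 2)"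
    by (rule sum_mono) (use card_Adjset_transmitted_at_le_2[OF assms(1-3)] in auto)
  finally show ?thesis
    using assms(4) by (simp add: of_nat_diff)
qed

lemma imp_eq_sum_min:
  assumes "wf_inst N" "1 \<le> d_e N e"
  shows "imp N asg tx p e =
     wt N p * (real (d_st N (fst e)) + (real (d_e N e) + 1) / 2 + real (d_rd N (snd e)))
     + (\<Sum>c\<in>Adjset N asg tx p e. min (wt N p) (real (d_e N e) * cw N asg c))"
proof -
  let ?A = "Adjset N asg tx p e" and ?H = "Hset N asg tx p e"
  let ?m = "\<lambda>c. min (wt N p) (real (d_e N e) * cw N asg c)"
  have H_iff: "c \<in> ?H \<longleftrightarrow> c \<in> ?A \<and> wt N p \<le> real (d_e N e) * cw N asg c" for c
    using assms(2) by (auto simp: Hset_def field_simps)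
  have "(\<Sum>c\<in>?A. ?m c) = (\<Sum>c\<in>?A - ?H. ?m c) + (\<Sum>c\<in>?H. ?m c)"
    using finite_Adjset[OF assms(1)] by (intro sum.subset_diff) (auto simp: H_iff)
  also have "(\<Sum>c\<in>?A - ?H. ?m c) = real (d_e N e) * (\<Sum>c\<in>Lset N asg tx p e. cw N asg c)"
    unfolding Lset_def sum_distrib_left by (rule sum.cong) (auto simp: H_iff)
  also have "(\<Sum>c\<in>?H. ?m c) = wt N p * real (card ?H)"
    by (simp add: H_iff)
  finally show ?thesis
    by (simp add: imp_def)
qed

lemma sum_Adjset_active_le_beta:
  assumes "wf_inst N" "p \<in> packets N"
  shows "(\<Sum>c\<in>{c \<in> Adjset N asg tx p (t, r). active N asg tx c \<tau>}. cw N asg c)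
           \<le> beta_t N asg tx t \<tau> + beta_r N asg tx r \<tau>"
proof -
  define St where "St = {c \<in> chunks N asg. active N asg tx c \<tau> \<and> fst (cedge asg c) = t}"
  define Sr where "Sr = {c \<in> chunks N asg. active N asg tx c \<tau> \<and> snd (cedge asg c) = r}"
  have fin: "finite St" "finite Sr"
    using finite_chunks[OF assms(1)] by (auto simp: St_def Sr_def)
  have nonneg: "0 \<le> cw N asg c" if "c \<in> St \<union> Sr" for c
  proof -
    have "c \<in> chunks N asg"
      using that by (auto simp: St_def Sr_def)
    then show ?thesis
      by (rule cw_nonneg[OF assms(1)])
  qed
  have "{c \<in> Adjset N asg tx p (t, r). active N asg tx c \<tau>} \<subseteq> St \<union> Sr"
    using Adjset_rel_le(3)[OF assms] by (auto simp: St_def Sr_def adj_def Adjset_def Bset_def)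
  then have "(\<Sum>c\<in>{c \<in> Adjset N asg tx p (t, r). active N asg tx c \<tau>}. cw N asg c)
             \<le> (\<Sum>c\<in>St \<union> Sr. cw N asg c)"
    using fin nonneg by (intro sum_mono2) auto
  also have "\<dots> \<le> (\<Sum>c\<in>St. cw N asg c) + (\<Sum>c\<in>Sr. cw N asg c)"
    using sum_nonneg[of "St \<inter> Sr" "cw N asg"] nonneg by (simp add: sum_Un[OF fin])
  finally show ?thesis
    by (simp add: beta_t_def beta_r_def St_def Sr_def)
qed

lemma sum_Adjset_min_le:
  assumes "wf_inst N" "alg_schedule N asg tx" "p \<in> packets N" "rel N p \<le> \<tau>" "0 \<le> D"
  shows "(\<Sum>c\<in>Adjset N asg tx p (t, r). min (wt N p) (D * cw N asg c))
           \<le> D * (beta_t N asg tx t \<tau> + beta_r N asg tx r \<tau>) + 2 * (real \<tau> - real (rel N p)) * wt N p"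
proof -
  let ?A = "Adjset N asg tx p (t, r)" and ?w = "wt N p"
  let ?m = "\<lambda>c. min ?w (D * cw N asg c)"
  let ?act = "{c \<in> ?A. active N asg tx c \<tau>}" and ?inact = "{c \<in> ?A. \<not> active N asg tx c \<tau>}"
  have "(\<Sum>c\<in>?act \<union> ?inact. ?m c) = (\<Sum>c\<in>?act. ?m c) + (\<Sum>c\<in>?inact. ?m c)"
    by (rule sum.union_disjoint) (use finite_Adjset[OF assms(1)] in auto)
  moreover have "?act \<union> ?inact = ?A"
    by blast
  ultimately have "(\<Sum>c\<in>?A. ?m c) = (\<Sum>c\<in>?act. ?m c) + (\<Sum>c\<in>?inact. ?m c)"
    by simp
  also have "(\<Sum>c\<in>?act. ?m c) \<le> D * (\<Sum>c\<in>?act. cw N asg c)"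
    unfolding sum_distrib_left by (rule sum_mono) simp
  also have "(\<Sum>c\<in>?inact. ?m c) \<le> real (card ?inact) * ?w"
    by (rule sum_bounded_above) simp
  also have "D * (\<Sum>c\<in>?act. cw N asg c) \<le> D * (beta_t N asg tx t \<tau> + beta_r N asg tx r \<tau>)"
    using sum_Adjset_active_le_beta[OF assms(1,3)] assms(5) by (rule mult_left_mono)
  also have "real (card ?inact) * ?w \<le> 2 * (real \<tau> - real (rel N p)) * ?w"
    using card_Adjset_inactive_le[OF assms(1-4)] wf_inst_packetD(1)[OF assms(1,3)]
    by (simp add: mult_right_mono)
  finally show ?thesis
    by simp
qed

theorem mainTheorem5:
  fixes N :: "('s, 't, 'r, 'd, 'p) inst"
    and asg :: "'p \<Rightarrow> ('t \<times> 'r) option"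
    and tx :: "'p \<times> nat \<Rightarrow> nat"
  assumes "wf_inst N"
    and "alg_run N asg tx"
    and "p \<in> packets N"
    and "(t, r) \<in> Ep N p"
    and "rel N p \<le> \<tau>"
  shows "imp N asg tx p (t, r) - real (d_e N (t, r)) * (beta_t N asg tx t \<tau> + beta_r N asg tx r \<tau>)
           \<le> 2 * wt N p * (real \<tau> + real (Delta N (t, r)) - real (rel N p))"
proof -
  let ?w = "wt N p" and ?d = "real (d_e N (t, r))" and ?\<Delta> = "real (Delta N (t, r))"
  have sched: "alg_schedule N asg tx"
    using assms(2) by (simp add: alg_run_def)
  have "(t, r) \<in> ER N"
    using assms(4) by (simp add: Ep_def)
  then have d1: "1 \<le> d_e N (t, r)"
    using assms(1) by (simp add: wf_inst_def)
  have w: "0 < ?w"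
    using wf_inst_packetD(1)[OF assms(1,3)] .
  have "?w * (real (d_st N t) + (?d + 1) / 2 + real (d_rd N r)) \<le> ?w * ?\<Delta>"
    using d1 w by (intro mult_left_mono) (auto simp: Delta_def)
  moreover have "2 * ?w * (real \<tau> + ?\<Delta> - real (rel N p))
      = 2 * (real \<tau> - real (rel N p)) * ?w + 2 * (?w * ?\<Delta>)"
    by (simp add: algebra_simps)
  moreover have "0 \<le> ?w * ?\<Delta>"
    using w by simp
  ultimately show ?thesis
    using imp_eq_sum_min[OF assms(1) d1, of asg tx p]
      sum_Adjset_min_le[OF assms(1) sched assms(3,5), where D = ?d and t = t and r = r]
    by simp
qed

end
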